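(* Let $E$ be a graph with finitely many vertices and $K$ a field of characteristic $0$. Assume $E$ contains a sink $w$ and an edge $f$ with $r(f)=w$. Then $1+2f^*$ and $1+2f$ are units of $L_K(E)$ and $\langle 1+2f^*,\,1+2f\rangle$ is a non-cyclic free subgroup of $L_K(E)^\times$.
   Context: A graph $E=(E^0,E^1,r,s)$; the Leavitt path algebra $L_K(E)$ is the free associative $K$-algebra generated by $E^0\cup E^1\cup\{e^*:e\in E^1\}$ subject to: $vv'=\delta_{v,v'}v$; $s(e)e=er(e)=e$; $r(e)e^*=e^*s(e)=e^*$; $e^*f=\delta_{e,f}r(e)$; $v=\sum_{s(e)=v}ee^*$ for every vertex $v$ emitting a finite nonzero number of edges. With $E^0$ finite, $L_K(E)$ is unital with $1=\sum_{v\in E^0}v$. A sink is a vertex emitting no edges. *)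

theory Defs
  imports "HOL-Algebra.Algebra"
begin

definition fa_carrier :: "('g list \<Rightarrow> 'k::field) set" where
  "fa_carrier = {f. finite {w. f w \<noteq> 0}}"

definition fa_mult :: "('g list \<Rightarrow> 'k::field) \<Rightarrow> ('g list \<Rightarrow> 'k) \<Rightarrow> ('g list \<Rightarrow> 'k)" where
  "fa_mult f g = (\<lambda>w. \<Sum>i\<le>length w. f (take i w) * g (drop i w))"

definition free_alg :: "('g list \<Rightarrow> 'k::field) ring" where
  "free_alg = \<lparr>carrier = fa_carrier, Group.monoid.mult = fa_mult,
               one = (\<lambda>w. if w = [] then 1 else 0),
               ring.zero = (\<lambda>w. 0), ring.add = (\<lambda>f g w. f w + g w)\<rparr>"

definition fa_gen :: "'g \<Rightarrow> ('g list \<Rightarrow> 'k::field)" where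
  "fa_gen x = (\<lambda>w. if w = [x] then 1 else 0)"

text \<open>Generators: vertices, edges, ghost edges.\<close>
datatype ('v, 'e) lpa_gen = Vx 'v | Ed 'e | Gh 'e

definition graph :: "'v set \<Rightarrow> 'e set \<Rightarrow> ('e \<Rightarrow> 'v) \<Rightarrow> ('e \<Rightarrow> 'v) \<Rightarrow> bool" where
  "graph E0 E1 r s \<longleftrightarrow> (\<forall>e\<in>E1. r e \<in> E0 \<and> s e \<in> E0)"

definition sink :: "'v set \<Rightarrow> 'e set \<Rightarrow> ('e \<Rightarrow> 'v) \<Rightarrow> 'v \<Rightarrow> bool" where
  "sink E0 E1 s v \<longleftrightarrow> v \<in> E0 \<and> (\<forall>e\<in>E1. s e \<noteq> v)"

text \<open>Defining relations (as elements r, meaning r = 0) of L_K(E), realised as a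
  quotient of the unital free algebra. Since E0 is finite, we add the relation
  1 = sum of vertices, so that the quotient coincides with the (a priori
  non-unital) Leavitt path algebra, which is unital with this unit.\<close>
definition lpa_rels ::
  "'v set \<Rightarrow> 'e set \<Rightarrow> ('e \<Rightarrow> 'v) \<Rightarrow> ('e \<Rightarrow> 'v) \<Rightarrow> ((('v,'e) lpa_gen) list \<Rightarrow> 'k::field) set"
where
  "lpa_rels E0 E1 r s =
     {fa_gen (Vx v) \<otimes>\<^bsub>free_alg\<^esub> fa_gen (Vx v') \<ominus>\<^bsub>free_alg\<^esub>
        (if v = v' then fa_gen (Vx v) else \<zero>\<^bsub>free_alg\<^esub>) | v v'. v \<in> E0 \<and> v' \<in> E0}
   \<union> {fa_gen (Vx (s e)) \<otimes>\<^bsub>free_alg\<^esub> fa_gen (Ed e) \<ominus>\<^bsub>free_alg\<^esub> fa_gen (Ed e) | e. e \<in> E1}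
   \<union> {fa_gen (Ed e) \<otimes>\<^bsub>free_alg\<^esub> fa_gen (Vx (r e)) \<ominus>\<^bsub>free_alg\<^esub> fa_gen (Ed e) | e. e \<in> E1}
   \<union> {fa_gen (Vx (r e)) \<otimes>\<^bsub>free_alg\<^esub> fa_gen (Gh e) \<ominus>\<^bsub>free_alg\<^esub> fa_gen (Gh e) | e. e \<in> E1}
   \<union> {fa_gen (Gh e) \<otimes>\<^bsub>free_alg\<^esub> fa_gen (Vx (s e)) \<ominus>\<^bsub>free_alg\<^esub> fa_gen (Gh e) | e. e \<in> E1}
   \<union> {fa_gen (Gh e) \<otimes>\<^bsub>free_alg\<^esub> fa_gen (Ed e') \<ominus>\<^bsub>free_alg\<^esub>
        (if e = e' then fa_gen (Vx (r e)) else \<zero>\<^bsub>free_alg\<^esub>) | e e'. e \<in> E1 \<and> e' \<in> E1}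
   \<union> {fa_gen (Vx v) \<ominus>\<^bsub>free_alg\<^esub>
        finsum free_alg (\<lambda>e. fa_gen (Ed e) \<otimes>\<^bsub>free_alg\<^esub> fa_gen (Gh e)) {e \<in> E1. s e = v}
        | v. v \<in> E0 \<and> finite {e \<in> E1. s e = v} \<and> {e \<in> E1. s e = v} \<noteq> {}}
   \<union> {\<one>\<^bsub>free_alg\<^esub> \<ominus>\<^bsub>free_alg\<^esub> finsum free_alg (\<lambda>v. fa_gen (Vx v)) E0}"

definition lpa_ideal ::
  "'v set \<Rightarrow> 'e set \<Rightarrow> ('e \<Rightarrow> 'v) \<Rightarrow> ('e \<Rightarrow> 'v) \<Rightarrow> ((('v,'e) lpa_gen) list \<Rightarrow> 'k::field) set"
where "lpa_ideal E0 E1 r s = genideal free_alg (lpa_rels E0 E1 r s)"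

definition LPA ::
  "'v set \<Rightarrow> 'e set \<Rightarrow> ('e \<Rightarrow> 'v) \<Rightarrow> ('e \<Rightarrow> 'v) \<Rightarrow> ((('v,'e) lpa_gen) list \<Rightarrow> 'k::field) set ring"
where "LPA E0 E1 r s = free_alg Quot lpa_ideal E0 E1 r s"

definition lpa_cls ::
  "'v set \<Rightarrow> 'e set \<Rightarrow> ('e \<Rightarrow> 'v) \<Rightarrow> ('e \<Rightarrow> 'v) \<Rightarrow> ('v,'e) lpa_gen \<Rightarrow> ((('v,'e) lpa_gen) list \<Rightarrow> 'k::field) set"
where "lpa_cls E0 E1 r s x = lpa_ideal E0 E1 r s +>\<^bsub>free_alg\<^esub> fa_gen x"

text \<open>Words over S and their inverses: (True, x) means x, (False, x) means x^-1.\<close>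
definition word_eval :: "('a, 'b) monoid_scheme \<Rightarrow> (bool \<times> 'a) list \<Rightarrow> 'a" where
  "word_eval G w = foldr (\<lambda>(b, x) acc. (if b then x else inv\<^bsub>G\<^esub> x) \<otimes>\<^bsub>G\<^esub> acc) w \<one>\<^bsub>G\<^esub>"

definition reduced_word :: "(bool \<times> 'a) list \<Rightarrow> bool" where
  "reduced_word w \<longleftrightarrow>
     (\<forall>i. Suc i < length w \<longrightarrow> \<not> (snd (w ! i) = snd (w ! Suc i) \<and> fst (w ! i) \<noteq> fst (w ! Suc i)))"

definition free_basis :: "('a, 'b) monoid_scheme \<Rightarrow> 'a set \<Rightarrow> bool" where
  "free_basis G S \<longleftrightarrow> S \<subseteq> carrier G \<and> generate G S = carrier G \<and>
     (\<forall>w. w \<noteq> [] \<and> set (map snd w) \<subseteq> S \<and> reduced_word w \<longrightarrow> word_eval G w \<noteq> one G)"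

definition free_group :: "('a, 'b) monoid_scheme \<Rightarrow> bool" where
  "free_group G \<longleftrightarrow> group G \<and> (\<exists>S. free_basis G S)"

end

theory Submission
  imports Defs
begin

text \<open>\<open>L\<^sub>K(E)\<close> acts on the vector space spanned by the paths ending at the sink \<open>w\<close>: edges are
  prepended, ghost edges strip themselves off, vertices project; every defining relation acts as
  zero, so this is a representation of the quotient. On the span of the trivial path \<open>w\<close> and
  of \<open>f\<close>, the elements \<open>1 + 2f\<^sup>*\<close> and \<open>1 + 2f\<close> act by Sanov's integer matrices
  \<open>[[1,2],[0,1]]\<close> and \<open>[[1,0],[2,1]]\<close>, and a ping-pong argument on \<open>\<int>\<^sup>2\<close> shows that no
  nonempty reduced word in them is the identity (characteristic \<open>0\<close> keeps the integer entries
  visible). They are units because \<open>r(f) = w \<noteq> s(f)\<close> forces \<open>f\<^sup>2 = (f\<^sup>*)\<^sup>2 = 0\<close>, so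
  \<open>1 - 2f\<^sup>*\<close> and \<open>1 - 2f\<close> are their inverses; and a free group on two distinct generators is
  not abelian, hence not cyclic.\<close>

lemma in_carrier_free_alg_iff: "f \<in> carrier free_alg \<longleftrightarrow> finite {w. f w \<noteq> 0}"
  by (simp add: free_alg_def fa_carrier_def)

lemma free_alg_ops:
  "x \<otimes>\<^bsub>free_alg\<^esub> y = fa_mult x y"
  "x \<oplus>\<^bsub>free_alg\<^esub> y = (\<lambda>w. x w + y w)"
  "\<one>\<^bsub>free_alg\<^esub> = (\<lambda>w. if w = [] then 1 else 0)"
  "\<zero>\<^bsub>free_alg\<^esub> = (\<lambda>w. 0)"
  by (simp_all add: free_alg_def)

lemma fa_mult_nonzero_split:
  assumes "fa_mult f g w \<noteq> 0"
  obtains u v where "w = u @ v" "f u \<noteq> 0" "g v \<noteq> 0"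
proof -
  from assms obtain i where "f (take i w) * g (drop i w) \<noteq> 0"
    unfolding fa_mult_def by (meson sum.neutral)
  then show ?thesis by (intro that[of "take i w" "drop i w"]) auto
qed

lemma finite_support_fa_mult:
  assumes "finite {w. f w \<noteq> 0}" "finite {w. g w \<noteq> 0}"
  shows "finite {w. fa_mult f g w \<noteq> (0::'k::field)}"
proof (rule finite_subset)
  show "{w. fa_mult f g w \<noteq> 0} \<subseteq> (\<lambda>(u, v). u @ v) ` ({u. f u \<noteq> 0} \<times> {v. g v \<noteq> 0})"
    by (auto elim!: fa_mult_nonzero_split)
qed (use assms in simp)

lemma fa_mult_assoc: "fa_mult (fa_mult f g) h w = fa_mult f (fa_mult g h) w"
proof -
  let ?n = "length w"
  let ?t = "\<lambda>i k. f (take i w) * (g (take k (drop i w)) * h (drop k (drop i w)))"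
  have "fa_mult f (fa_mult g h) w = (\<Sum>i\<le>?n. \<Sum>k\<le>?n - i. ?t i k)"
    by (simp add: fa_mult_def sum_distrib_left)
  also have "\<dots> = (\<Sum>(i, k)\<in>{(i, k). i + k \<le> ?n}. ?t i k)"
  proof -
    have "{(i, k). i + k \<le> ?n} = Sigma {..?n} (\<lambda>i. {..?n - i})" by auto
    then show ?thesis by (simp add: sum.Sigma)
  qed
  also have "\<dots> = (\<Sum>t\<le>?n. \<Sum>i\<le>t. ?t i (t - i))"
    by (rule sum.triangle_reindex_eq)
  also have "\<dots> = fa_mult (fa_mult f g) h w"
    unfolding fa_mult_def sum_distrib_right
  proof (rule sum.cong[OF refl])
    fix t assume "t \<in> {..?n}"
    then have len: "length (take t w) = t" by auto
    show "(\<Sum>i\<le>t. ?t i (t - i)) =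
        (\<Sum>i\<le>length (take t w). f (take i (take t w)) * g (drop i (take t w)) * h (drop t w))"
      unfolding len
    proof (rule sum.cong[OF refl])
      fix i assume "i \<in> {..t}"
      then have "take i (take t w) = take i w" "drop i (take t w) = take (t - i) (drop i w)"
        "drop (t - i) (drop i w) = drop t w"
        by (simp_all add: min_def drop_take)
      then show "?t i (t - i) = f (take i (take t w)) * g (drop i (take t w)) * h (drop t w)"
        by (simp add: mult.assoc)
    qed
  qed
  finally show ?thesis ..
qed

lemma fa_mult_one_left: "fa_mult (\<lambda>w. if w = [] then 1 else 0) g w = g w"
proof -
  have "fa_mult (\<lambda>w. if w = [] then 1 else 0) g w = (\<Sum>i\<le>length w. if i = 0 then g (drop i w) else 0)"
    unfolding fa_mult_def by (rule sum.cong) auto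
  then show ?thesis by (simp add: sum.delta)
qed

lemma fa_mult_one_right: "fa_mult g (\<lambda>w. if w = [] then 1 else 0) w = g w"
proof -
  have "fa_mult g (\<lambda>w. if w = [] then 1 else 0) w
      = (\<Sum>i\<le>length w. if i = length w then g (take i w) else 0)"
    unfolding fa_mult_def by (rule sum.cong) auto
  then show ?thesis by (simp add: sum.delta)
qed

lemma fa_mult_add_left: "fa_mult (\<lambda>w. x w + y w) z = (\<lambda>w. fa_mult x z w + fa_mult y z w)"
  by (auto simp: fa_mult_def algebra_simps sum.distrib)

lemma fa_mult_add_right: "fa_mult z (\<lambda>w. x w + y w) = (\<lambda>w. fa_mult z x w + fa_mult z y w)"
  by (auto simp: fa_mult_def algebra_simps sum.distrib)

lemma finite_support_add:
  "finite {w. x w \<noteq> 0} \<Longrightarrow> finite {w. y w \<noteq> 0} \<Longrightarrow> finite {w. x w + y w \<noteq> (0::'a::field)}"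
  by (rule finite_subset[of _ "{w. x w \<noteq> 0} \<union> {w. y w \<noteq> 0}"]) auto

lemma ring_free_alg: "ring (free_alg :: ('g list \<Rightarrow> 'k::field) ring)"
proof (rule ringI)
  show "abelian_group (free_alg :: ('g list \<Rightarrow> 'k) ring)"
  proof (rule abelian_groupI, goal_cases)
    case (6 x)
    then show ?case
      by (intro bexI[where x = "\<lambda>w. - x w"]) (auto simp: free_alg_ops in_carrier_free_alg_iff)
  qed (auto simp: free_alg_ops in_carrier_free_alg_iff finite_support_add algebra_simps)
  show "monoid (free_alg :: ('g list \<Rightarrow> 'k) ring)"
    by (rule monoidI) (auto simp: free_alg_ops in_carrier_free_alg_iff finite_support_fa_mult
        fa_mult_assoc fa_mult_one_left fa_mult_one_right)
qed (simp_all add: free_alg_ops fa_mult_add_left fa_mult_add_right)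

interpretation free_alg: ring "free_alg :: ('g list \<Rightarrow> 'k::field) ring"
  by (rule ring_free_alg)

lemma free_alg_a_inv: "x \<in> carrier free_alg \<Longrightarrow> \<ominus>\<^bsub>free_alg\<^esub> x = (\<lambda>w. - (x::'g list \<Rightarrow> 'k::field) w)"
  by (rule free_alg.minus_equality) (auto simp: free_alg_ops in_carrier_free_alg_iff)

lemma fa_gen_in_carrier: "fa_gen x \<in> carrier free_alg"
  by (simp add: in_carrier_free_alg_iff fa_gen_def)

lemma splits_eq_image: "{(u, v). u @ v = z} = (\<lambda>i. (take i z, drop i z)) ` {..length z}"
proof (intro subset_antisym subsetI)
  fix uv assume "uv \<in> {(u, v). u @ v = z}"
  then obtain u v where "uv = (u, v)" "u @ v = z" by auto
  then show "uv \<in> (\<lambda>i. (take i z, drop i z)) ` {..length z}"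
    by (intro image_eqI[where x = "length u"]) auto
qed auto

lemma finite_splits: "finite {(u, v). u @ v = z}"
  by (simp add: splits_eq_image)

lemma fa_mult_as_sum:
  fixes x y :: "'g list \<Rightarrow> 'k::field"
  shows "fa_mult x y z = (\<Sum>(u, v)\<in>{(u, v). u @ v = z}. x u * y v)"
proof -
  have "inj_on (\<lambda>i. (take i z, drop i z)) {..length z}"
    by (rule inj_onI) (metis atMost_iff length_take min.absorb2 prod.inject)
  then show ?thesis
    unfolding fa_mult_def splits_eq_image by (simp add: sum.reindex)
qed

section \<open>Matrix coefficients of a partial action\<close>

locale partial_action =
  fixes act :: "'g \<Rightarrow> 'p \<Rightarrow> 'p option"
begin

fun word_act :: "'g list \<Rightarrow> 'p \<Rightarrow> 'p option" where
  "word_act [] p = Some p"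
| "word_act (g # u) p = Option.bind (word_act u p) (act g)"

lemma word_act_append: "word_act (u @ v) p = Option.bind (word_act v p) (word_act u)"
  by (induction u) (auto simp: bind_assoc)

text \<open>The free algebra acts on the vector space with basis \<open>'p\<close>, a generator \<open>g\<close> sending
  \<open>p\<close> to \<open>q\<close> if \<open>act g p = Some q\<close> and to \<open>0\<close> if \<open>act g p = None\<close>;
  \<open>coeff x p q\<close> is the coefficient of \<open>q\<close> in \<open>x \<cdot> p\<close>.\<close>

definition coeff :: "('g list \<Rightarrow> 'k::field) \<Rightarrow> 'p \<Rightarrow> 'p \<Rightarrow> 'k" where
  "coeff x p q = (\<Sum>u | x u \<noteq> 0. x u * of_bool (word_act u p = Some q))"

lemma coeff_eq_sum_superset:
  assumes "finite T" "{u. x u \<noteq> 0} \<subseteq> T"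
  shows "coeff x p q = (\<Sum>u\<in>T. x u * of_bool (word_act u p = Some q))"
  unfolding coeff_def by (rule sum.mono_neutral_left) (use assms in auto)

lemma coeff_nonzero_reachable:
  assumes "coeff x p q \<noteq> 0"
  obtains u where "word_act u p = Some q"
proof -
  from assms obtain u where "x u * of_bool (word_act u p = Some q) \<noteq> 0"
    unfolding coeff_def by (meson sum.not_neutral_contains_not_neutral)
  then show ?thesis by (intro that[of u]) simp
qed

lemma finite_coeff_support:
  assumes "x \<in> carrier free_alg"
  shows "finite {q. coeff x p q \<noteq> 0}"
proof (rule finite_subset)
  show "{q. coeff x p q \<noteq> 0} \<subseteq> (\<lambda>u. the (word_act u p)) ` {u. x u \<noteq> 0}"
  proof
    fix q assume "q \<in> {q. coeff x p q \<noteq> 0}"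
    then obtain u where "x u * of_bool (word_act u p = Some q) \<noteq> 0"
      unfolding coeff_def by (meson mem_Collect_eq sum.not_neutral_contains_not_neutral)
    then show "q \<in> (\<lambda>u. the (word_act u p)) ` {u. x u \<noteq> 0}"
      by (intro image_eqI[where x = u]) auto
  qed
qed (use assms in \<open>simp add: in_carrier_free_alg_iff\<close>)

lemma coeff_add:
  assumes "x \<in> carrier free_alg" "y \<in> carrier free_alg"
  shows "coeff (x \<oplus>\<^bsub>free_alg\<^esub> y) p q = coeff x p q + coeff y p q"
proof -
  let ?T = "{u. x u \<noteq> 0} \<union> {u. y u \<noteq> 0}"
  have fin: "finite ?T" using assms by (simp add: in_carrier_free_alg_iff)
  have "coeff (x \<oplus>\<^bsub>free_alg\<^esub> y) p q = (\<Sum>u\<in>?T. (x u + y u) * of_bool (word_act u p = Some q))"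
    unfolding free_alg_ops by (rule coeff_eq_sum_superset) (use fin in auto)
  also have "\<dots> = coeff x p q + coeff y p q"
    by (simp add: distrib_right sum.distrib coeff_eq_sum_superset[OF fin])
  finally show ?thesis .
qed

lemma coeff_minus:
  assumes "x \<in> carrier free_alg" "y \<in> carrier free_alg"
  shows "coeff (x \<ominus>\<^bsub>free_alg\<^esub> y) p q = coeff x p q - coeff y p q"
proof -
  have "coeff (\<ominus>\<^bsub>free_alg\<^esub> y) p q = - coeff y p q"
    using assms by (simp add: free_alg_a_inv coeff_def sum_negf)
  then show ?thesis using assms by (simp add: a_minus_def coeff_add)
qed

lemma coeff_zero: "coeff \<zero>\<^bsub>free_alg\<^esub> p q = 0"
  by (simp add: coeff_def free_alg_ops)

lemma coeff_one: "coeff \<one>\<^bsub>free_alg\<^esub> p q = of_bool (p = q)"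
proof -
  have "{u. (if u = [] then 1 else 0::'k::field) \<noteq> 0} = {[]}" by auto
  then show ?thesis by (simp add: coeff_def free_alg_ops)
qed

lemma coeff_gen: "coeff (fa_gen g) p q = of_bool (act g p = Some q)"
proof -
  have "{u. fa_gen g u \<noteq> (0::'k::field)} = {[g]}" by (auto simp: fa_gen_def)
  then show ?thesis by (simp add: coeff_def fa_gen_def)
qed

lemma coeff_finsum:
  fixes F :: "'a \<Rightarrow> 'g list \<Rightarrow> 'k::field"
  assumes "finite A" "F \<in> A \<rightarrow> carrier free_alg"
  shows "coeff (finsum free_alg F A) p q = (\<Sum>a\<in>A. coeff (F a) p q)"
  using assms
  by (induction A rule: finite_induct) (simp_all add: coeff_zero coeff_add free_alg.finsum_closed)

lemma indicator_word_act_append: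
  assumes "finite S" "\<And>m. word_act v p = Some m \<Longrightarrow> m \<in> S"
  shows "(\<Sum>m\<in>S. of_bool (word_act v p = Some m) * of_bool (word_act u m = Some q)) =
         (of_bool (word_act (u @ v) p = Some q) :: 'k::field)"
proof (cases "word_act v p")
  case (Some m0)
  then have "m0 \<in> S" using assms by auto
  moreover have "(\<Sum>m\<in>S. of_bool (word_act v p = Some m) * of_bool (word_act u m = Some q)) =
        (\<Sum>m\<in>S. if m = m0 then (of_bool (word_act u m0 = Some q) :: 'k) else 0)"
    using Some by (intro sum.cong) auto
  ultimately show ?thesis using Some assms(1) by (simp add: word_act_append)
qed (simp add: word_act_append)

lemma coeff_mult_reachable:
  fixes x y :: "'g list \<Rightarrow> 'k::field"
  assumes x: "x \<in> carrier free_alg" and y: "y \<in> carrier free_alg" and "finite S"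
    and reach: "\<And>u m. y u \<noteq> 0 \<Longrightarrow> word_act u p = Some m \<Longrightarrow> m \<in> S"
  shows "coeff (x \<otimes>\<^bsub>free_alg\<^esub> y) p q = (\<Sum>m\<in>S. coeff x m q * coeff y p m)"
proof -
  define P where "P = {u. x u \<noteq> 0} \<times> {v. y v \<noteq> 0}"
  define W where "W = (\<lambda>(u, v). u @ v) ` P"
  have "finite P" using x y by (simp add: P_def in_carrier_free_alg_iff)
  then have "finite W" by (simp add: W_def)
  let ?ind = "\<lambda>u. of_bool (word_act u p = Some q) :: 'k"
  have split: "fa_mult x y z = (\<Sum>(u, v)\<in>{uv\<in>P. (case uv of (u, v) \<Rightarrow> u @ v) = z}. x u * y v)" for z
    unfolding fa_mult_as_sum
    by (rule sum.mono_neutral_right) (use finite_splits in \<open>auto simp: P_def\<close>)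
  have "coeff (x \<otimes>\<^bsub>free_alg\<^esub> y) p q = (\<Sum>z\<in>W. fa_mult x y z * ?ind z)"
    unfolding free_alg_ops
    by (rule coeff_eq_sum_superset[OF \<open>finite W\<close>])
       (auto simp: W_def P_def elim!: fa_mult_nonzero_split)
  also have "\<dots> = (\<Sum>z\<in>W. \<Sum>(u, v)\<in>{uv\<in>P. (case uv of (u, v) \<Rightarrow> u @ v) = z}. x u * y v * ?ind (u @ v))"
    unfolding split sum_distrib_right by (intro sum.cong) auto
  also have "\<dots> = (\<Sum>(u, v)\<in>P. x u * y v * ?ind (u @ v))"
    by (rule sum.group[OF \<open>finite P\<close> \<open>finite W\<close>]) (simp add: W_def)
  also have "\<dots> = (\<Sum>(u, v)\<in>P. \<Sum>m\<in>S.
      (x u * of_bool (word_act u m = Some q)) * (y v * of_bool (word_act v p = Some m)))"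
  proof (intro sum.cong refl, clarify)
    fix u v assume "(u, v) \<in> P"
    then have "?ind (u @ v) = (\<Sum>m\<in>S. of_bool (word_act v p = Some m) * of_bool (word_act u m = Some q))"
      by (intro indicator_word_act_append[symmetric] \<open>finite S\<close> reach) (auto simp: P_def)
    then show "x u * y v * ?ind (u @ v) = (\<Sum>m\<in>S.
        (x u * of_bool (word_act u m = Some q)) * (y v * of_bool (word_act v p = Some m)))"
      by (simp add: sum_distrib_left mult_ac)
  qed
  also have "\<dots> = (\<Sum>m\<in>S. \<Sum>u | x u \<noteq> 0. \<Sum>v | y v \<noteq> 0.
      (x u * of_bool (word_act u m = Some q)) * (y v * of_bool (word_act v p = Some m)))"
    unfolding P_def sum.cartesian_product[symmetric] by (simp add: sum.swap[of _ S])
  also have "\<dots> = (\<Sum>m\<in>S. coeff x m q * coeff y p m)"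
    by (simp add: coeff_def sum_product)
  finally show ?thesis .
qed

lemma coeff_mult:
  fixes x y :: "'g list \<Rightarrow> 'k::field"
  assumes x: "x \<in> carrier free_alg" and y: "y \<in> carrier free_alg"
    and "finite S" "{m. coeff y p m \<noteq> 0} \<subseteq> S"
  shows "coeff (x \<otimes>\<^bsub>free_alg\<^esub> y) p q = (\<Sum>m\<in>S. coeff x m q * coeff y p m)"
proof -
  let ?R = "(\<lambda>u. the (word_act u p)) ` {u. y u \<noteq> 0}"
  have "finite ?R" using y by (simp add: in_carrier_free_alg_iff)
  have "coeff (x \<otimes>\<^bsub>free_alg\<^esub> y) p q = (\<Sum>m\<in>?R \<union> S. coeff x m q * coeff y p m)"
    by (rule coeff_mult_reachable[OF x y])
       (use \<open>finite S\<close> \<open>finite ?R\<close> in \<open>auto intro!: image_eqI simp: option.the_def\<close>)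
  also have "\<dots> = (\<Sum>m\<in>S. coeff x m q * coeff y p m)"
    by (rule sum.mono_neutral_right) (use \<open>finite S\<close> \<open>finite ?R\<close> assms(4) in auto)
  finally show ?thesis .
qed

lemma coeff_gen_mult_gen:
  "coeff (fa_gen g \<otimes>\<^bsub>free_alg\<^esub> fa_gen h) p q =
    (case act h p of None \<Rightarrow> 0 | Some m \<Rightarrow> (of_bool (act g m = Some q) :: 'k::field))"
proof -
  have "coeff (fa_gen g \<otimes>\<^bsub>free_alg\<^esub> fa_gen h) p q =
      (\<Sum>m\<in>set_option (act h p). coeff (fa_gen g) m q * (coeff (fa_gen h) p m :: 'k))"
    by (rule coeff_mult[OF fa_gen_in_carrier fa_gen_in_carrier]) (auto simp: coeff_gen)
  then show ?thesis by (cases "act h p") (simp_all add: coeff_gen)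
qed

definition annihilator :: "'p set \<Rightarrow> ('g list \<Rightarrow> 'k::field) set" where
  "annihilator V = {x \<in> carrier free_alg. \<forall>p\<in>V. \<forall>q. coeff x p q = 0}"

lemma word_act_closed:
  assumes closed: "\<And>g m n. m \<in> V \<Longrightarrow> act g m = Some n \<Longrightarrow> n \<in> V"
    and "p \<in> V" "word_act u p = Some q"
  shows "q \<in> V"
  using assms(3) by (induction u arbitrary: q) (auto simp: bind_eq_Some_conv intro: closed \<open>p \<in> V\<close>)

lemma ideal_annihilator:
  assumes closed: "\<And>g p q. p \<in> V \<Longrightarrow> act g p = Some q \<Longrightarrow> q \<in> V"
  shows "ideal (annihilator V :: ('g list \<Rightarrow> 'k::field) set) free_alg"
proof (rule idealI[OF ring_free_alg])
  show "subgroup (annihilator V :: ('g list \<Rightarrow> 'k) set) (add_monoid free_alg)"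
  proof (rule free_alg.add.subgroupI)
    fix a :: "'g list \<Rightarrow> 'k" assume a: "a \<in> annihilator V"
    then have "\<ominus>\<^bsub>free_alg\<^esub> a = \<zero>\<^bsub>free_alg\<^esub> \<ominus>\<^bsub>free_alg\<^esub> a"
      by (simp add: annihilator_def a_minus_def)
    then show "\<ominus>\<^bsub>free_alg\<^esub> a \<in> annihilator V"
      using a by (simp add: annihilator_def coeff_minus coeff_zero)
  next
    fix a b :: "'g list \<Rightarrow> 'k" assume "a \<in> annihilator V" "b \<in> annihilator V"
    then show "a \<oplus>\<^bsub>free_alg\<^esub> b \<in> annihilator V"
      by (simp add: annihilator_def coeff_add)
  qed (auto simp: annihilator_def coeff_zero)
next
  fix a x :: "'g list \<Rightarrow> 'k"
  assume a: "a \<in> annihilator V" and x: "x \<in> carrier free_alg"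
  then have ac: "a \<in> carrier free_alg" by (simp add: annihilator_def)
  have "coeff (x \<otimes>\<^bsub>free_alg\<^esub> a) p q = 0" if "p \<in> V" for p q
    using coeff_mult[OF x ac, of "{}" p q] a that by (simp add: annihilator_def)
  then show "x \<otimes>\<^bsub>free_alg\<^esub> a \<in> annihilator V" using x ac by (simp add: annihilator_def)
  have "coeff (a \<otimes>\<^bsub>free_alg\<^esub> x) p q = 0" if pV: "p \<in> V" for p q
  proof -
    have "coeff (a \<otimes>\<^bsub>free_alg\<^esub> x) p q = (\<Sum>m | coeff x p m \<noteq> 0. coeff a m q * coeff x p m)"
      by (rule coeff_mult[OF ac x finite_coeff_support[OF x]]) simp
    also have "\<dots> = 0"
    proof (rule sum.neutral, clarify)
      fix m assume "coeff x p m \<noteq> 0"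
      then obtain u where "word_act u p = Some m" by (rule coeff_nonzero_reachable)
      then have "m \<in> V" using closed pV word_act_closed by metis
      then show "coeff a m q * coeff x p m = 0" using a by (simp add: annihilator_def)
    qed
    finally show ?thesis .
  qed
  then show "a \<otimes>\<^bsub>free_alg\<^esub> x \<in> annihilator V" using x ac by (simp add: annihilator_def)
qed

lemma minus_in_annihilatorI:
  assumes "x \<in> carrier free_alg" "y \<in> carrier free_alg"
    and "\<And>p q. p \<in> V \<Longrightarrow> coeff x p q = coeff y p q"
  shows "x \<ominus>\<^bsub>free_alg\<^esub> y \<in> annihilator V"
  using assms by (simp add: annihilator_def coeff_minus)

lemma coeff_eq_if_same_coset:
  assumes "ideal I free_alg" "I \<subseteq> annihilator V"
    and "x \<in> carrier free_alg" "y \<in> carrier free_alg" "I +>\<^bsub>free_alg\<^esub> x = I +>\<^bsub>free_alg\<^esub> y"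
    and "p \<in> V"
  shows "coeff x p q = coeff y p q"
proof -
  interpret I: ideal I free_alg by (rule assms(1))
  have "x \<in> I +>\<^bsub>free_alg\<^esub> y" using assms(3,5) I.a_rcos_self by metis
  then have "x \<ominus>\<^bsub>free_alg\<^esub> y \<in> annihilator V"
    using assms(2-4) by (auto simp: I.a_rcos_module_minus[OF ring_free_alg])
  then show ?thesis using assms(3,4,6) by (simp add: annihilator_def coeff_minus)
qed

end

lemma lpa_rels_subset_carrier: "lpa_rels E0 E1 r s \<subseteq> (carrier free_alg :: (_ \<Rightarrow> 'k::field) set)"
  unfolding lpa_rels_def
  by (auto intro!: free_alg.minus_closed free_alg.finsum_closed simp: fa_gen_in_carrier)

lemma ideal_lpa_ideal: "ideal (lpa_ideal E0 E1 r s :: (_ \<Rightarrow> 'k::field) set) free_alg"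
  unfolding lpa_ideal_def by (rule free_alg.genideal_ideal[OF lpa_rels_subset_carrier])

abbreviation lpa_proj ::
  "'v set \<Rightarrow> 'e set \<Rightarrow> ('e \<Rightarrow> 'v) \<Rightarrow> ('e \<Rightarrow> 'v) \<Rightarrow>
    (('v, 'e) lpa_gen list \<Rightarrow> 'k::field) \<Rightarrow> (('v, 'e) lpa_gen list \<Rightarrow> 'k) set"
  where "lpa_proj E0 E1 r s \<equiv> a_r_coset free_alg (lpa_ideal E0 E1 r s)"

lemma ring_hom_ring_lpa_proj:
  "ring_hom_ring free_alg (LPA E0 E1 r s) (lpa_proj E0 E1 r s :: _ \<Rightarrow> (_ \<Rightarrow> 'k::field) set)"
  unfolding LPA_def by (rule ideal.rcos_ring_hom_ring[OF ideal_lpa_ideal])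

lemma ring_LPA: "ring (LPA E0 E1 r s :: (_ \<Rightarrow> 'k::field) set ring)"
  using ring_hom_ring_lpa_proj by (rule ring_hom_ring.axioms(2))

lemma lpa_cls_eq_proj: "lpa_cls E0 E1 r s x = lpa_proj E0 E1 r s (fa_gen x)"
  by (simp add: lpa_cls_def)

lemma lpa_cls_in_carrier: "lpa_cls E0 E1 r s x \<in> carrier (LPA E0 E1 r s)"
  unfolding lpa_cls_eq_proj
  by (rule ring_hom_closed[OF ring_hom_ring.homh[OF ring_hom_ring_lpa_proj] fa_gen_in_carrier])

lemma lpa_proj_eq_if_relation:
  assumes "x \<ominus>\<^bsub>free_alg\<^esub> y \<in> lpa_rels E0 E1 r s"
    and "x \<in> carrier free_alg" "y \<in> carrier free_alg"
  shows "lpa_proj E0 E1 r s x = lpa_proj E0 E1 r s (y :: _ \<Rightarrow> 'k::field)"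
proof -
  interpret I: ideal "lpa_ideal E0 E1 r s :: (_ \<Rightarrow> 'k) set" free_alg by (rule ideal_lpa_ideal)
  have "x \<ominus>\<^bsub>free_alg\<^esub> y \<in> lpa_ideal E0 E1 r s"
    using free_alg.genideal_self[OF lpa_rels_subset_carrier] assms(1) unfolding lpa_ideal_def by blast
  then have "x \<in> lpa_proj E0 E1 r s y"
    using assms(2,3) by (simp add: I.a_rcos_module_minus[OF ring_free_alg])
  then show ?thesis using assms(3) I.a_repr_independence' by metis
qed

lemma lpa_cls_mult_eq_if_relation:
  assumes "fa_gen x \<otimes>\<^bsub>free_alg\<^esub> fa_gen y \<ominus>\<^bsub>free_alg\<^esub> z \<in> lpa_rels E0 E1 r s"
    and "z \<in> carrier free_alg"
  shows "lpa_cls E0 E1 r s x \<otimes>\<^bsub>LPA E0 E1 r s\<^esub> lpa_cls E0 E1 r s y = lpa_proj E0 E1 r s (z :: _ \<Rightarrow> 'k::field)"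
  using lpa_proj_eq_if_relation[OF assms(1) _ assms(2)]
  by (simp add: lpa_cls_eq_proj fa_gen_in_carrier
      ring_hom_mult[OF ring_hom_ring.homh[OF ring_hom_ring_lpa_proj], symmetric])

lemma lpa_rels_vertex_orthogonal:
  assumes "v \<in> E0" "v' \<in> E0" "v \<noteq> v'"
  shows "fa_gen (Vx v) \<otimes>\<^bsub>free_alg\<^esub> fa_gen (Vx v') \<ominus>\<^bsub>free_alg\<^esub> (\<zero>\<^bsub>free_alg\<^esub> :: _ \<Rightarrow> 'k::field)
    \<in> lpa_rels E0 E1 r s"
proof -
  have "fa_gen (Vx v) \<otimes>\<^bsub>free_alg\<^esub> fa_gen (Vx v') \<ominus>\<^bsub>free_alg\<^esub>
      (if v = v' then fa_gen (Vx v) else \<zero>\<^bsub>free_alg\<^esub> :: _ \<Rightarrow> 'k) \<in> lpa_rels E0 E1 r s"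
    using assms(1,2) unfolding lpa_rels_def by blast
  then show ?thesis using assms(3) by simp
qed

lemma lpa_rels_edge:
  assumes "e \<in> E1"
  shows "fa_gen (Vx (s e)) \<otimes>\<^bsub>free_alg\<^esub> fa_gen (Ed e) \<ominus>\<^bsub>free_alg\<^esub> (fa_gen (Ed e) :: _ \<Rightarrow> 'k::field)
      \<in> lpa_rels E0 E1 r s"
    and "fa_gen (Ed e) \<otimes>\<^bsub>free_alg\<^esub> fa_gen (Vx (r e)) \<ominus>\<^bsub>free_alg\<^esub> (fa_gen (Ed e) :: _ \<Rightarrow> 'k)
      \<in> lpa_rels E0 E1 r s"
    and "fa_gen (Vx (r e)) \<otimes>\<^bsub>free_alg\<^esub> fa_gen (Gh e) \<ominus>\<^bsub>free_alg\<^esub> (fa_gen (Gh e) :: _ \<Rightarrow> 'k)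
      \<in> lpa_rels E0 E1 r s"
    and "fa_gen (Gh e) \<otimes>\<^bsub>free_alg\<^esub> fa_gen (Vx (s e)) \<ominus>\<^bsub>free_alg\<^esub> (fa_gen (Gh e) :: _ \<Rightarrow> 'k)
      \<in> lpa_rels E0 E1 r s"
  using assms unfolding lpa_rels_def by blast+

lemma lpa_edge_square_zero:
  assumes "graph E0 E1 r s" "e \<in> E1" "r e \<noteq> s e"
  defines "c \<equiv> lpa_cls E0 E1 r s" and "L \<equiv> LPA E0 E1 r s :: (_ \<Rightarrow> 'k::field) set ring"
  shows "c (Ed e) \<otimes>\<^bsub>L\<^esub> c (Ed e) = \<zero>\<^bsub>L\<^esub>" and "c (Gh e) \<otimes>\<^bsub>L\<^esub> c (Gh e) = \<zero>\<^bsub>L\<^esub>"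
proof -
  interpret L: ring L unfolding L_def by (rule ring_LPA)
  have cc: "c x \<in> carrier L" for x unfolding c_def L_def by (rule lpa_cls_in_carrier)
  have proj_zero: "lpa_proj E0 E1 r s \<zero>\<^bsub>free_alg\<^esub> = \<zero>\<^bsub>L\<^esub>"
    unfolding L_def using ring_hom_ring.homh[OF ring_hom_ring_lpa_proj]
    by (rule ring_hom_zero[OF _ ring_free_alg ring_LPA])
  have "r e \<in> E0" "s e \<in> E0" using assms(1,2) by (auto simp: graph_def)
  then have orth: "c (Vx (r e)) \<otimes>\<^bsub>L\<^esub> c (Vx (s e)) = \<zero>\<^bsub>L\<^esub>"
    "c (Vx (s e)) \<otimes>\<^bsub>L\<^esub> c (Vx (r e)) = \<zero>\<^bsub>L\<^esub>"
    using assms(3) unfolding c_def L_def proj_zero[unfolded L_def, symmetric]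
    by (intro lpa_cls_mult_eq_if_relation lpa_rels_vertex_orthogonal free_alg.zero_closed; simp)+
  have ed: "c (Vx (s e)) \<otimes>\<^bsub>L\<^esub> c (Ed e) = c (Ed e)" "c (Ed e) \<otimes>\<^bsub>L\<^esub> c (Vx (r e)) = c (Ed e)"
    and gh: "c (Vx (r e)) \<otimes>\<^bsub>L\<^esub> c (Gh e) = c (Gh e)" "c (Gh e) \<otimes>\<^bsub>L\<^esub> c (Vx (s e)) = c (Gh e)"
    unfolding c_def L_def
    by (intro lpa_cls_mult_eq_if_relation[OF _ fa_gen_in_carrier, folded lpa_cls_eq_proj]
        lpa_rels_edge[OF assms(2)])+
  have "c (Ed e) \<otimes>\<^bsub>L\<^esub> c (Ed e) = (c (Ed e) \<otimes>\<^bsub>L\<^esub> c (Vx (r e))) \<otimes>\<^bsub>L\<^esub> (c (Vx (s e)) \<otimes>\<^bsub>L\<^esub> c (Ed e))"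
    using ed by simp
  also have "\<dots> = c (Ed e) \<otimes>\<^bsub>L\<^esub> ((c (Vx (r e)) \<otimes>\<^bsub>L\<^esub> c (Vx (s e))) \<otimes>\<^bsub>L\<^esub> c (Ed e))"
    using cc by (simp add: L.m_assoc)
  finally show "c (Ed e) \<otimes>\<^bsub>L\<^esub> c (Ed e) = \<zero>\<^bsub>L\<^esub>" using orth cc by simp
  have "c (Gh e) \<otimes>\<^bsub>L\<^esub> c (Gh e) = (c (Gh e) \<otimes>\<^bsub>L\<^esub> c (Vx (s e))) \<otimes>\<^bsub>L\<^esub> (c (Vx (r e)) \<otimes>\<^bsub>L\<^esub> c (Gh e))"
    using gh by simp
  also have "\<dots> = c (Gh e) \<otimes>\<^bsub>L\<^esub> ((c (Vx (s e)) \<otimes>\<^bsub>L\<^esub> c (Vx (r e))) \<otimes>\<^bsub>L\<^esub> c (Gh e))"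
    using cc by (simp add: L.m_assoc)
  finally show "c (Gh e) \<otimes>\<^bsub>L\<^esub> c (Gh e) = \<zero>\<^bsub>L\<^esub>" using orth cc by simp
qed

section \<open>The representation on paths into a sink\<close>

locale paths_to_sink =
  fixes E0 :: "'v set" and E1 :: "'e set" and r s :: "'e \<Rightarrow> 'v" and w :: 'v
  assumes graph: "graph E0 E1 r s" and finite_vertices: "finite E0" and sink: "sink E0 E1 s w"
begin

text \<open>A path ending at the sink \<open>w\<close> is the list of its edges, first edge first, and \<open>[]\<close> is the
  trivial path at \<open>w\<close>.\<close>

fun path_source :: "'e list \<Rightarrow> 'v" where
  "path_source [] = w"
| "path_source (e # p) = s e"

fun is_path :: "'e list \<Rightarrow> bool" where
  "is_path [] \<longleftrightarrow> True"
| "is_path (e # p) \<longleftrightarrow> e \<in> E1 \<and> r e = path_source p \<and> is_path p"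

fun path_act :: "('v, 'e) lpa_gen \<Rightarrow> 'e list \<Rightarrow> 'e list option" where
  "path_act (Vx v) p = (if path_source p = v then Some p else None)"
| "path_act (Ed e) p = (if e \<in> E1 \<and> r e = path_source p then Some (e # p) else None)"
| "path_act (Gh e) p = (case p of [] \<Rightarrow> None | e' # p' \<Rightarrow> if e' = e then Some p' else None)"

sublocale partial_action path_act .

lemma path_act_preserves_path: "is_path p \<Longrightarrow> path_act g p = Some q \<Longrightarrow> is_path q"
  by (cases g) (auto split: if_splits list.splits)

lemma path_source_in_vertices: "is_path p \<Longrightarrow> path_source p \<in> E0"
  using graph sink by (cases p) (auto simp: graph_def sink_def)

abbreviation paths :: "'e list set" where "paths \<equiv> {p. is_path p}"

lemma vertex_relation_annihilates:
  assumes "v \<in> E0" "finite {e \<in> E1. s e = v}" "{e \<in> E1. s e = v} \<noteq> {}"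
  shows "fa_gen (Vx v) \<ominus>\<^bsub>free_alg\<^esub>
      finsum free_alg (\<lambda>e. fa_gen (Ed e) \<otimes>\<^bsub>free_alg\<^esub> fa_gen (Gh e)) {e \<in> E1. s e = v}
    \<in> (annihilator paths :: (_ \<Rightarrow> 'k::field) set)"
proof (rule minus_in_annihilatorI)
  let ?A = "{e \<in> E1. s e = v}"
  let ?F = "\<lambda>e. fa_gen (Ed e) \<otimes>\<^bsub>free_alg\<^esub> fa_gen (Gh e) :: _ \<Rightarrow> 'k"
  have F: "?F \<in> ?A \<rightarrow> carrier free_alg" by (simp add: fa_gen_in_carrier)
  then show "finsum free_alg ?F ?A \<in> carrier free_alg" by (rule free_alg.finsum_closed)
  fix p q assume p: "p \<in> paths"
  have "(\<Sum>e\<in>?A. coeff (?F e) p q) = coeff (fa_gen (Vx v)) p q"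
  proof (cases p)
    case Nil
    have "v \<noteq> w" using assms(3) sink by (auto simp: sink_def)
    then show ?thesis using Nil by (simp add: coeff_gen coeff_gen_mult_gen)
  next
    case (Cons e0 p')
    then have "(\<Sum>e\<in>?A. coeff (?F e) p q) = (\<Sum>e\<in>?A. if e = e0 then of_bool (q = p) else 0)"
      using p by (intro sum.cong) (auto simp: coeff_gen_mult_gen)
    then show ?thesis using Cons p assms(2) by (simp add: coeff_gen)
  qed
  then show "coeff (fa_gen (Vx v)) p q = coeff (finsum free_alg ?F ?A) p q"
    by (simp add: coeff_finsum[OF assms(2) F])
qed (rule fa_gen_in_carrier)

lemma unit_relation_annihilates:
  "\<one>\<^bsub>free_alg\<^esub> \<ominus>\<^bsub>free_alg\<^esub> finsum free_alg (\<lambda>v. fa_gen (Vx v)) E0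
    \<in> (annihilator paths :: (_ \<Rightarrow> 'k::field) set)"
proof (rule minus_in_annihilatorI)
  have F: "(\<lambda>v. fa_gen (Vx v)) \<in> E0 \<rightarrow> (carrier free_alg :: (_ \<Rightarrow> 'k) set)"
    by (simp add: fa_gen_in_carrier)
  then show "finsum free_alg (\<lambda>v. fa_gen (Vx v)) E0 \<in> (carrier free_alg :: (_ \<Rightarrow> 'k) set)"
    by (rule free_alg.finsum_closed)
  fix p q assume "p \<in> paths"
  have "coeff (finsum free_alg (\<lambda>v. fa_gen (Vx v)) E0) p q = (\<Sum>v\<in>E0. coeff (fa_gen (Vx v) :: _ \<Rightarrow> 'k) p q)"
    by (rule coeff_finsum[OF finite_vertices F])
  also have "\<dots> = (\<Sum>v\<in>E0. if v = path_source p then of_bool (p = q) else 0)"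
    by (intro sum.cong) (auto simp: coeff_gen)
  also have "\<dots> = of_bool (p = q)"
    using finite_vertices path_source_in_vertices \<open>p \<in> paths\<close> by simp
  finally show "coeff (\<one>\<^bsub>free_alg\<^esub> :: _ \<Rightarrow> 'k) p q = coeff (finsum free_alg (\<lambda>v. fa_gen (Vx v)) E0) p q"
    unfolding coeff_one by (rule sym)
qed simp

lemma lpa_rels_subset_annihilator:
  "lpa_rels E0 E1 r s \<subseteq> (annihilator paths :: (_ \<Rightarrow> 'k::field) set)"
proof -
  have gen2: "fa_gen x \<otimes>\<^bsub>free_alg\<^esub> fa_gen y \<in> carrier free_alg" for x y
    by (intro free_alg.m_closed fa_gen_in_carrier)
  have gen2_rel: "fa_gen x \<otimes>\<^bsub>free_alg\<^esub> fa_gen y \<ominus>\<^bsub>free_alg\<^esub> z \<in> (annihilator paths :: (_ \<Rightarrow> 'k) set)"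
    if "z \<in> carrier free_alg" "\<And>p q. is_path p \<Longrightarrow>
      coeff (fa_gen x \<otimes>\<^bsub>free_alg\<^esub> fa_gen y) p q = (coeff z p q :: 'k)" for x y z
    using that gen2 by (intro minus_in_annihilatorI) auto
  show ?thesis
    unfolding lpa_rels_def
    by (intro Un_least subsetI; clarify)
       ((rule vertex_relation_annihilates unit_relation_annihilates; assumption)
        | rule gen2_rel; auto simp: coeff_gen_mult_gen coeff_gen coeff_zero fa_gen_in_carrier gen2
            split: list.splits)+
qed

lemma lpa_ideal_subset_annihilator:
  "lpa_ideal E0 E1 r s \<subseteq> (annihilator paths :: (_ \<Rightarrow> 'k::field) set)"
proof -
  have "ideal (annihilator paths :: (_ \<Rightarrow> 'k) set) free_alg"
    by (rule ideal_annihilator) (auto intro: path_act_preserves_path)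
  then show ?thesis
    unfolding lpa_ideal_def by (rule free_alg.genideal_minimal[OF _ lpa_rels_subset_annihilator])
qed

lemma coeff_eq_if_lpa_proj_eq:
  assumes "x \<in> carrier free_alg" "y \<in> carrier free_alg"
    and "lpa_proj E0 E1 r s x = lpa_proj E0 E1 r s y" "is_path p"
  shows "coeff x p q = (coeff y p q :: 'k::field)"
  by (rule coeff_eq_if_same_coset[OF ideal_lpa_ideal lpa_ideal_subset_annihilator]) (use assms in auto)

end

lemma (in ring) one_add_square_zero_inverse:
  assumes x: "x \<in> carrier R" and xx: "x \<otimes> x = \<zero>"
  shows "(\<one> \<oplus> x) \<otimes> (\<one> \<ominus> x) = \<one>" and "(\<one> \<ominus> x) \<otimes> (\<one> \<oplus> x) = \<one>"
proof -
  have "\<one> \<oplus> x \<oplus> \<ominus> x = \<one>" "\<one> \<oplus> \<ominus> x \<oplus> x = \<one>"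
    using x by (simp_all add: a_assoc r_neg l_neg)
  then show "(\<one> \<oplus> x) \<otimes> (\<one> \<ominus> x) = \<one>" "(\<one> \<ominus> x) \<otimes> (\<one> \<oplus> x) = \<one>"
    using x xx by (simp_all add: minus_eq l_distr r_distr r_minus l_minus a_assoc[symmetric])
qed

section \<open>Sanov's ping-pong on \<open>\<int>\<^sup>2\<close>\<close>

text \<open>A letter \<open>(sg, t)\<close> stands for the matrix \<open>[[1,2],[0,1]]\<close> if \<open>t\<close> and \<open>[[1,0],[2,1]]\<close>
  otherwise, inverted if \<open>\<not> sg\<close>; \<open>sanov_act\<close> applies it to the column vector \<open>(x, y)\<close>.\<close>

fun sanov_act :: "bool \<times> bool \<Rightarrow> int \<times> int \<Rightarrow> int \<times> int" where
  "sanov_act (sg, True) (x, y) = (x + (if sg then 2 else -2) * y, y)"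
| "sanov_act (sg, False) (x, y) = (x, y + (if sg then 2 else -2) * x)"

definition sign_pattern :: "bool \<Rightarrow> int \<Rightarrow> int \<Rightarrow> bool" where
  "sign_pattern sg x y \<longleftrightarrow>
    (if sg then x > 0 \<and> y > 0 \<or> x < 0 \<and> y < 0 else x > 0 \<and> y < 0 \<or> x < 0 \<and> y > 0)"

fun pingpong_region :: "bool \<times> bool \<Rightarrow> int \<times> int \<Rightarrow> bool" where
  "pingpong_region (sg, True) (x, y) \<longleftrightarrow> \<bar>x\<bar> > \<bar>y\<bar> \<and> sign_pattern sg x y"
| "pingpong_region (sg, False) (x, y) \<longleftrightarrow> \<bar>y\<bar> > \<bar>x\<bar> \<and> sign_pattern sg x y"

fun pingpong_seed :: "bool \<times> bool \<Rightarrow> int \<times> int" where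
  "pingpong_seed (sg, True) = (0, 1)"
| "pingpong_seed (sg, False) = (1, 0)"

lemma sanov_act_region:
  assumes "pingpong_region l' u" "\<not> (snd l' = snd l \<and> fst l' \<noteq> fst l)"
  shows "pingpong_region l (sanov_act l u)"
proof -
  obtain sg t sg' t' x y where "l = (sg, t)" "l' = (sg', t')" "u = (x, y)"
    by (metis prod.exhaust)
  with assms show ?thesis
    by (cases sg; cases t; cases sg'; cases t') (auto simp: sign_pattern_def abs_if split: if_splits)
qed

lemma sanov_act_seed_region: "pingpong_region l (sanov_act l (pingpong_seed l))"
  by (cases l rule: pingpong_seed.cases) (auto simp: sign_pattern_def)

lemma sanov_word_region:
  assumes "w \<noteq> []" "reduced_word w"
  shows "pingpong_region (hd w) (foldr sanov_act w (pingpong_seed (last w)))"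
  using assms
proof (induction w)
  case (Cons l w)
  show ?case
  proof (cases "w = []")
    case True
    then show ?thesis using sanov_act_seed_region by simp
  next
    case False
    have "reduced_word w" using Cons.prems(2) unfolding reduced_word_def
      by (metis Suc_mono length_Cons nth_Cons_Suc)
    moreover have "\<not> (snd (hd w) = snd l \<and> fst (hd w) \<noteq> fst l)"
      using Cons.prems(2) False unfolding reduced_word_def
      by (metis Suc_less_eq length_Cons length_greater_0_conv hd_conv_nth nth_Cons_0 nth_Cons_Suc)
    ultimately show ?thesis using Cons.IH False sanov_act_region by simp
  qed
qed simp

theorem sanov_word_moves_seed:
  assumes "w \<noteq> []" "reduced_word w"
  shows "foldr sanov_act w (pingpong_seed (last w)) \<noteq> pingpong_seed (last w)"
proof
  assume "foldr sanov_act w (pingpong_seed (last w)) = pingpong_seed (last w)"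
  then have "pingpong_region (hd w) (pingpong_seed (last w))"
    using sanov_word_region[OF assms] by simp
  moreover obtain sg t sg' t' where "hd w = (sg, t)" "last w = (sg', t')"
    by (metis prod.exhaust)
  ultimately show False by (cases t; cases t'; cases sg) (auto simp: sign_pattern_def)
qed

lemma (in group) word_eval_subgroup_generated:
  assumes "S \<subseteq> carrier G" "set (map snd w) \<subseteq> S"
  shows "word_eval (subgroup_generated G S) w = word_eval G w"
  using assms(2)
proof (induction w)
  case (Cons l w)
  have "snd l \<in> carrier (subgroup_generated G S)"
    using Cons.prems assms(1) by (auto simp: carrier_subgroup_generated intro: generate.incl)
  then show ?case using Cons by (auto simp: word_eval_def split: prod.splits)
qed (simp add: word_eval_def)

lemma (in group) free_basis_subgroup_generatedI:
  assumes "S \<subseteq> carrier G"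
    and "\<And>w. w \<noteq> [] \<Longrightarrow> set (map snd w) \<subseteq> S \<Longrightarrow> reduced_word w \<Longrightarrow> word_eval G w \<noteq> \<one>"
  shows "free_basis (subgroup_generated G S) S"
  unfolding free_basis_def
proof (intro conjI allI impI)
  show S: "S \<subseteq> carrier (subgroup_generated G S)"
    using assms(1) by (auto simp: carrier_subgroup_generated intro: generate.incl)
  have "generate (subgroup_generated G S) S = carrier (subgroup_generated (subgroup_generated G S) S)"
    by (simp only: carrier_subgroup_generated[of "subgroup_generated G S" S] Int_absorb1[OF S])
  then show "generate (subgroup_generated G S) S = carrier (subgroup_generated G S)"
    by simp
  fix w assume "w \<noteq> [] \<and> set (map snd w) \<subseteq> S \<and> reduced_word w"
  then show "word_eval (subgroup_generated G S) w \<noteq> \<one>\<^bsub>subgroup_generated G S\<^esub>"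
    using assms by (simp add: word_eval_subgroup_generated)
qed

lemma reduced_word_recode:
  assumes "reduced_word ws" "set (map snd ws) \<subseteq> {a, b}"
  shows "reduced_word (map (\<lambda>(sg, x). (sg, x = a)) ws)"
proof -
  let ?ws = "map (\<lambda>(sg, x). (sg, x = a)) ws"
  show ?thesis unfolding reduced_word_def
  proof (intro allI impI)
    fix i assume i: "Suc i < length ?ws"
    obtain sg1 x1 sg2 x2 where e: "ws ! i = (sg1, x1)" "ws ! Suc i = (sg2, x2)"
      by (metis prod.exhaust)
    have "ws ! i \<in> set ws" "ws ! Suc i \<in> set ws" using i by auto
    then have "x1 \<in> {a, b}" "x2 \<in> {a, b}" using assms(2) e by force+
    moreover have "\<not> (x1 = x2 \<and> sg1 \<noteq> sg2)"
      using assms(1) i e unfolding reduced_word_def by force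
    ultimately show "\<not> (snd (?ws ! i) = snd (?ws ! Suc i) \<and> fst (?ws ! i) \<noteq> fst (?ws ! Suc i))"
      using i e by auto
  qed
qed

lemma not_comm_group_if_free_basis:
  assumes "free_basis H S" "a \<in> S" "b \<in> S" "a \<noteq> b"
  shows "\<not> comm_group H"
proof
  assume "comm_group H"
  then interpret H: comm_group H .
  let ?w = "[(True, a), (True, b), (False, a), (False, b)]"
  have ab: "a \<in> carrier H" "b \<in> carrier H" using assms(1-3) by (auto simp: free_basis_def)
  have "word_eval H ?w = a \<otimes>\<^bsub>H\<^esub> (b \<otimes>\<^bsub>H\<^esub> (inv\<^bsub>H\<^esub> a \<otimes>\<^bsub>H\<^esub> inv\<^bsub>H\<^esub> b))"
    using ab by (simp add: word_eval_def)
  also have "\<dots> = b \<otimes>\<^bsub>H\<^esub> ((a \<otimes>\<^bsub>H\<^esub> inv\<^bsub>H\<^esub> a) \<otimes>\<^bsub>H\<^esub> inv\<^bsub>H\<^esub> b)"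
    using ab by (simp only: H.m_lcomm[of a b] H.m_assoc H.inv_closed H.m_closed)
  also have "\<dots> = \<one>\<^bsub>H\<^esub>" using ab by simp
  finally have "word_eval H ?w = \<one>\<^bsub>H\<^esub>" .
  moreover have "reduced_word ?w"
    using assms(4) by (auto simp: reduced_word_def less_Suc_eq nth_Cons')
  ultimately show False using assms(1-3) by (auto simp: free_basis_def)
qed

locale edge_into_sink = paths_to_sink E0 E1 r s w
  for E0 :: "'v set" and E1 :: "'e set" and r s :: "'e \<Rightarrow> 'v" and w :: 'v +
  fixes f :: 'e
  assumes f_edge: "f \<in> E1" and f_range: "r f = w"
begin

lemma f_source: "s f \<noteq> w"
  using sink f_edge by (auto simp: sink_def)

lemma f_not_loop: "r f \<noteq> s f"
  using f_range f_source by simp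

lemma path_act_f:
  "path_act (Gh f) [] = None" "path_act (Gh f) [f] = Some []"
  "path_act (Ed f) [] = Some [f]" "path_act (Ed f) [f] = None"
  using f_edge f_range f_source by auto

lemma is_path_f: "is_path [f]"
  using f_edge f_range by simp

fun sanov_letter :: "bool \<times> bool \<Rightarrow> ('v, 'e) lpa_gen list \<Rightarrow> 'k::field" where
  "sanov_letter (True, t) = \<one>\<^bsub>free_alg\<^esub> \<oplus>\<^bsub>free_alg\<^esub>
     (fa_gen (if t then Gh f else Ed f) \<oplus>\<^bsub>free_alg\<^esub> fa_gen (if t then Gh f else Ed f))"
| "sanov_letter (False, t) = \<one>\<^bsub>free_alg\<^esub> \<ominus>\<^bsub>free_alg\<^esub>
     (fa_gen (if t then Gh f else Ed f) \<oplus>\<^bsub>free_alg\<^esub> fa_gen (if t then Gh f else Ed f))"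

declare sanov_letter.simps [simp del]

fun sanov_word :: "(bool \<times> bool) list \<Rightarrow> ('v, 'e) lpa_gen list \<Rightarrow> 'k::field" where
  "sanov_word [] = \<one>\<^bsub>free_alg\<^esub>"
| "sanov_word (l # ls) = sanov_letter l \<otimes>\<^bsub>free_alg\<^esub> sanov_word ls"

lemma sanov_letter_in_carrier: "sanov_letter l \<in> carrier free_alg"
  by (cases l rule: sanov_letter.cases) (simp_all add: sanov_letter.simps fa_gen_in_carrier)

lemma sanov_word_in_carrier: "sanov_word ls \<in> carrier free_alg"
  by (induction ls) (simp_all add: sanov_letter_in_carrier)

lemma coeff_sanov_letter:
  "coeff (sanov_letter (sg, t)) p q = of_bool (p = q) +
     (if sg then 2 else -2) * of_bool (path_act (if t then Gh f else Ed f) p = Some q)"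
proof -
  let ?x = "fa_gen (if t then Gh f else Ed f) :: _ \<Rightarrow> 'k::field"
  have "?x \<oplus>\<^bsub>free_alg\<^esub> ?x \<in> carrier free_alg" by (simp add: fa_gen_in_carrier)
  then show ?thesis
    by (cases sg) (simp_all add: sanov_letter.simps coeff_add coeff_minus coeff_one coeff_gen fa_gen_in_carrier)
qed

lemma coeff_sanov_letter_basis:
  "coeff (sanov_letter (sg, t)) [] [] = 1" "coeff (sanov_letter (sg, t)) [f] [f] = 1"
  "coeff (sanov_letter (sg, True)) [] [f] = 0" "coeff (sanov_letter (sg, True)) [f] [] = (if sg then 2 else -2)"
  "coeff (sanov_letter (sg, False)) [] [f] = (if sg then 2 else -2)" "coeff (sanov_letter (sg, False)) [f] [] = 0"
  by (simp_all only: coeff_sanov_letter path_act_f if_True if_False) simp_all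

lemma coeff_sanov_letter_outside: "p \<in> {[], [f]} \<Longrightarrow> q \<notin> {[], [f]} \<Longrightarrow> coeff (sanov_letter l) p q = 0"
  by (cases l) (auto simp: coeff_sanov_letter path_act_f f_not_loop)

lemma coeff_sanov_word_outside:
  "p \<in> {[], [f]} \<Longrightarrow> q \<notin> {[], [f]} \<Longrightarrow> coeff (sanov_word ls) p q = (0::'k::field)"
proof (induction ls arbitrary: q)
  case (Cons l ls)
  have "coeff (sanov_word (l # ls)) p q =
      (\<Sum>m\<in>{[], [f]}. coeff (sanov_letter l) m q * (coeff (sanov_word ls) p m :: 'k))"
    unfolding sanov_word.simps
  proof (rule coeff_mult[OF sanov_letter_in_carrier sanov_word_in_carrier])
    show "{m. coeff (sanov_word ls) p m \<noteq> (0::'k)} \<subseteq> {[], [f]}"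
    proof
      fix m assume "m \<in> {m. coeff (sanov_word ls) p m \<noteq> (0::'k)}"
      then have "coeff (sanov_word ls) p m \<noteq> (0::'k)" by simp
      then show "m \<in> {[], [f]}" by (rule contrapos_np[OF _ Cons.IH[OF Cons.prems(1)]])
    qed
  qed simp
  then show ?case using Cons.prems by (simp add: coeff_sanov_letter_outside)
next
  case Nil
  then have "p \<noteq> q" by blast
  then show ?case by (simp add: coeff_one)
qed

lemma coeff_sanov_word_Cons:
  assumes "p \<in> {[], [f]}"
  shows "coeff (sanov_word (l # ls)) p q =
    coeff (sanov_letter l) [] q * coeff (sanov_word ls) p [] +
    coeff (sanov_letter l) [f] q * (coeff (sanov_word ls) p [f] :: 'k::field)"
proof -
  have "coeff (sanov_word (l # ls)) p q = (\<Sum>m\<in>{[], [f]}. coeff (sanov_letter l) m q * coeff (sanov_word ls) p m)"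
    unfolding sanov_word.simps by (rule coeff_mult[OF sanov_letter_in_carrier sanov_word_in_carrier])
       (use assms coeff_sanov_word_outside in auto)
  then show ?thesis by simp
qed

text \<open>The coefficient of \<open>q\<close> in \<open>x \<cdot> (m [] + n [f])\<close>, where \<open>[]\<close> is the trivial path at \<open>w\<close>.\<close>

definition span_coeff :: "(('v, 'e) lpa_gen list \<Rightarrow> 'k::field) \<Rightarrow> int \<times> int \<Rightarrow> 'e list \<Rightarrow> 'k" where
  "span_coeff x u q = of_int (fst u) * coeff x [] q + of_int (snd u) * coeff x [f] q"

lemma span_coeff_sanov_letter:
  "span_coeff (sanov_letter l) u [] = (of_int (fst (sanov_act l u)) :: 'k::field)"
  "span_coeff (sanov_letter l) u [f] = (of_int (snd (sanov_act l u)) :: 'k)"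
proof -
  obtain sg t x y where "l = (sg, t)" "u = (x, y)" by (metis prod.exhaust)
  then show "span_coeff (sanov_letter l) u [] = of_int (fst (sanov_act l u))"
    "span_coeff (sanov_letter l) u [f] = of_int (snd (sanov_act l u))"
    by (cases t; simp add: span_coeff_def coeff_sanov_letter_basis algebra_simps)+
qed

lemma span_coeff_sanov_word:
  "span_coeff (sanov_word ls) u [] = (of_int (fst (foldr sanov_act ls u)) :: 'k::field)"
  "span_coeff (sanov_word ls) u [f] = (of_int (snd (foldr sanov_act ls u)) :: 'k)"
proof (induction ls)
  case Nil
  show "span_coeff (sanov_word []) u [] = (of_int (fst (foldr sanov_act [] u)) :: 'k)"
    "span_coeff (sanov_word []) u [f] = (of_int (snd (foldr sanov_act [] u)) :: 'k)"
    by (simp_all add: span_coeff_def coeff_one)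
next
  case (Cons l ls)
  let ?u = "foldr sanov_act ls u"
  have "span_coeff (sanov_word (l # ls)) u q = (span_coeff (sanov_letter l) ?u q :: 'k)" for q
  proof -
    have "span_coeff (sanov_word (l # ls)) u q =
        coeff (sanov_letter l) [] q * span_coeff (sanov_word ls) u [] +
        coeff (sanov_letter l) [f] q * (span_coeff (sanov_word ls) u [f] :: 'k)"
      by (simp add: span_coeff_def coeff_sanov_word_Cons algebra_simps del: sanov_word.simps)
    also have "\<dots> = span_coeff (sanov_letter l) ?u q"
      unfolding Cons.IH by (simp add: span_coeff_def mult.commute)
    finally show ?thesis .
  qed
  then show "span_coeff (sanov_word (l # ls)) u [] = (of_int (fst (foldr sanov_act (l # ls) u)) :: 'k)"
    "span_coeff (sanov_word (l # ls)) u [f] = (of_int (snd (foldr sanov_act (l # ls) u)) :: 'k)"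
    by (simp_all add: span_coeff_sanov_letter)
qed

lemma sanov_word_nontrivial:
  assumes "ls \<noteq> []" "reduced_word ls"
  shows "lpa_proj E0 E1 r s (sanov_word ls) \<noteq> lpa_proj E0 E1 r s (\<one>\<^bsub>free_alg\<^esub> :: _ \<Rightarrow> 'k::field_char_0)"
proof
  let ?u = "pingpong_seed (last ls)"
  assume eq: "lpa_proj E0 E1 r s (sanov_word ls) = lpa_proj E0 E1 r s (\<one>\<^bsub>free_alg\<^esub> :: _ \<Rightarrow> 'k)"
  have "coeff (sanov_word ls) p q = (coeff \<one>\<^bsub>free_alg\<^esub> p q :: 'k)" if "p \<in> {[], [f]}" for p q
  proof (rule coeff_eq_if_lpa_proj_eq[OF sanov_word_in_carrier free_alg.one_closed eq])
    from that consider "p = []" | "p = [f]" by blast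
    then show "is_path p" using is_path_f by cases simp_all
  qed
  then have span: "span_coeff (sanov_word ls) ?u q = (span_coeff \<one>\<^bsub>free_alg\<^esub> ?u q :: 'k)" for q
    by (simp add: span_coeff_def)
  have "(of_int (fst (foldr sanov_act ls ?u)) :: 'k) = of_int (fst ?u)"
    using span[of "[]"] unfolding span_coeff_sanov_word by (simp add: span_coeff_def coeff_one)
  moreover have "(of_int (snd (foldr sanov_act ls ?u)) :: 'k) = of_int (snd ?u)"
    using span[of "[f]"] unfolding span_coeff_sanov_word by (simp add: span_coeff_def coeff_one)
  ultimately have "foldr sanov_act ls ?u = ?u"
    by (simp add: prod_eq_iff)
  with sanov_word_moves_seed[OF assms] show False ..
qed

abbreviation sanov_unit :: "bool \<times> bool \<Rightarrow> (('v, 'e) lpa_gen list \<Rightarrow> 'k::field) set" where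
  "sanov_unit l \<equiv> lpa_proj E0 E1 r s (sanov_letter l)"

lemma sanov_unit_eq:
  defines "c \<equiv> \<lambda>t. lpa_cls E0 E1 r s (if t then Gh f else Ed f)"
    and "L \<equiv> LPA E0 E1 r s :: (_ \<Rightarrow> 'k::field) set ring"
  shows "sanov_unit (True, t) = \<one>\<^bsub>L\<^esub> \<oplus>\<^bsub>L\<^esub> (c t \<oplus>\<^bsub>L\<^esub> c t)"
    and "sanov_unit (False, t) = \<one>\<^bsub>L\<^esub> \<ominus>\<^bsub>L\<^esub> (c t \<oplus>\<^bsub>L\<^esub> c t)"
proof -
  interpret h: ring_hom_ring free_alg L "lpa_proj E0 E1 r s"
    unfolding L_def by (rule ring_hom_ring_lpa_proj)
  show "sanov_unit (True, t) = \<one>\<^bsub>L\<^esub> \<oplus>\<^bsub>L\<^esub> (c t \<oplus>\<^bsub>L\<^esub> c t)"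
    "sanov_unit (False, t) = \<one>\<^bsub>L\<^esub> \<ominus>\<^bsub>L\<^esub> (c t \<oplus>\<^bsub>L\<^esub> c t)"
    by (simp_all add: sanov_letter.simps c_def lpa_cls_eq_proj a_minus_def fa_gen_in_carrier h.hom_add h.hom_a_inv
        split del: if_split)
qed

lemma sanov_unit_inverse:
  "sanov_unit (sg, t) \<otimes>\<^bsub>LPA E0 E1 r s\<^esub> sanov_unit (\<not> sg, t) = (\<one>\<^bsub>LPA E0 E1 r s\<^esub> :: (_ \<Rightarrow> 'k::field) set)"
proof -
  let ?L = "LPA E0 E1 r s :: (_ \<Rightarrow> 'k) set ring"
  interpret L: ring ?L by (rule ring_LPA)
  let ?c = "lpa_cls E0 E1 r s (if t then Gh f else Ed f) :: (_ \<Rightarrow> 'k) set"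
  have c: "?c \<in> carrier ?L" by (rule lpa_cls_in_carrier)
  have "?c \<otimes>\<^bsub>?L\<^esub> ?c = \<zero>\<^bsub>?L\<^esub>"
    using lpa_edge_square_zero[OF graph f_edge f_not_loop] by (cases t) simp_all
  then have "(?c \<oplus>\<^bsub>?L\<^esub> ?c) \<otimes>\<^bsub>?L\<^esub> (?c \<oplus>\<^bsub>?L\<^esub> ?c) = \<zero>\<^bsub>?L\<^esub>"
    using c by (simp add: L.l_distr L.r_distr)
  from L.one_add_square_zero_inverse[OF _ this] c show ?thesis
    by (cases sg) (simp_all add: sanov_unit_eq)
qed

lemma sanov_unit_Units: "sanov_unit l \<in> Units (LPA E0 E1 r s :: (_ \<Rightarrow> 'k::field) set ring)"
proof -
  obtain sg t where l: "l = (sg, t)" by (cases l)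
  have "sanov_unit (sg, t) \<in> carrier (LPA E0 E1 r s :: (_ \<Rightarrow> 'k) set ring)"
    "sanov_unit (\<not> sg, t) \<in> carrier (LPA E0 E1 r s :: (_ \<Rightarrow> 'k) set ring)"
    by (simp_all add: sanov_letter_in_carrier ring_hom_closed[OF ring_hom_ring.homh[OF ring_hom_ring_lpa_proj]])
  then show ?thesis
    unfolding l Units_def using sanov_unit_inverse[of sg t] sanov_unit_inverse[of "\<not> sg" t] by auto
qed

lemma inv_sanov_unit:
  "inv\<^bsub>units_of (LPA E0 E1 r s)\<^esub> sanov_unit (sg, t) = (sanov_unit (\<not> sg, t) :: (_ \<Rightarrow> 'k::field) set)"
proof -
  let ?L = "LPA E0 E1 r s :: (_ \<Rightarrow> 'k) set ring"
  interpret L: ring ?L by (rule ring_LPA)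
  have "sanov_unit (\<not> sg, t) = inv\<^bsub>?L\<^esub> sanov_unit (sg, t)"
  proof (rule L.inv_unique')
    show "sanov_unit (sg, t) \<in> carrier ?L" "sanov_unit (\<not> sg, t) \<in> carrier ?L"
      by (rule L.Units_closed[OF sanov_unit_Units])+
    show "sanov_unit (sg, t) \<otimes>\<^bsub>?L\<^esub> sanov_unit (\<not> sg, t) = \<one>\<^bsub>?L\<^esub>"
      by (rule sanov_unit_inverse)
    show "sanov_unit (\<not> sg, t) \<otimes>\<^bsub>?L\<^esub> sanov_unit (sg, t) = \<one>\<^bsub>?L\<^esub>"
      using sanov_unit_inverse[of "\<not> sg" t] by simp
  qed
  then show ?thesis by (simp add: L.units_of_inv[OF sanov_unit_Units])
qed

lemma word_eval_sanov_units:
  assumes "set (map snd ws) \<subseteq> {sanov_unit (True, True), sanov_unit (True, False)}"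
  shows "word_eval (units_of (LPA E0 E1 r s)) ws =
    (lpa_proj E0 E1 r s (sanov_word (map (\<lambda>(sg, x). (sg, x = sanov_unit (True, True))) ws))
      :: (_ \<Rightarrow> 'k::field) set)"
proof -
  interpret h: ring_hom_ring free_alg "LPA E0 E1 r s" "lpa_proj E0 E1 r s :: _ \<Rightarrow> (_ \<Rightarrow> 'k) set"
    by (rule ring_hom_ring_lpa_proj)
  show ?thesis
    using assms
  proof (induction ws)
    case Nil
    show ?case by (simp add: word_eval_def units_of_one)
  next
    case (Cons l ws)
    obtain sg x where l: "l = (sg, x)" by (cases l)
    define t where "t = (x = sanov_unit (True, True))"
    have "x \<in> {sanov_unit (True, True), sanov_unit (True, False)}" using Cons.prems l by simp
    then have "x = sanov_unit (True, t)"
      unfolding t_def by (cases "x = sanov_unit (True, True)") simp_all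
    then have "(if sg then x else inv\<^bsub>units_of (LPA E0 E1 r s)\<^esub> x) = (sanov_unit (sg, t) :: (_ \<Rightarrow> 'k) set)"
      by (cases sg) (simp_all add: inv_sanov_unit)
    then show ?case
      using Cons l by (simp add: word_eval_def units_of_mult sanov_letter_in_carrier sanov_word_in_carrier t_def)
  qed
qed

lemma sanov_units_distinct:
  "sanov_unit (True, True) \<noteq> (sanov_unit (True, False) :: (_ \<Rightarrow> 'k::field_char_0) set)"
proof
  assume "sanov_unit (True, True) = (sanov_unit (True, False) :: (_ \<Rightarrow> 'k) set)"
  then have "coeff (sanov_letter (True, True)) [f] [] = (coeff (sanov_letter (True, False)) [f] [] :: 'k)"
    by (intro coeff_eq_if_lpa_proj_eq sanov_letter_in_carrier is_path_f)
  then show False by (simp add: coeff_sanov_letter_basis)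
qed

theorem free_basis_sanov_units:
  defines "L \<equiv> LPA E0 E1 r s :: (_ \<Rightarrow> 'k::field_char_0) set ring"
    and "S \<equiv> {sanov_unit (True, True), sanov_unit (True, False)}"
  shows "free_basis (subgroup_generated (units_of L) S) S"
proof (rule group.free_basis_subgroup_generatedI)
  interpret L: ring L unfolding L_def by (rule ring_LPA)
  show "group (units_of L)" by (rule L.units_group)
  show "S \<subseteq> carrier (units_of L)"
    unfolding S_def L_def by (simp add: units_of_carrier sanov_unit_Units)
  fix ws assume "ws \<noteq> []" "set (map snd ws) \<subseteq> S" "reduced_word ws"
  then have "lpa_proj E0 E1 r s (sanov_word (map (\<lambda>(sg, x). (sg, x = sanov_unit (True, True))) ws))
      \<noteq> lpa_proj E0 E1 r s (\<one>\<^bsub>free_alg\<^esub> :: _ \<Rightarrow> 'k)"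
    unfolding S_def by (intro sanov_word_nontrivial reduced_word_recode) auto
  moreover have "lpa_proj E0 E1 r s (\<one>\<^bsub>free_alg\<^esub> :: _ \<Rightarrow> 'k) = \<one>\<^bsub>units_of L\<^esub>"
    unfolding L_def units_of_one by (rule ring_hom_one[OF ring_hom_ring.homh[OF ring_hom_ring_lpa_proj]])
  ultimately show "word_eval (units_of L) ws \<noteq> \<one>\<^bsub>units_of L\<^esub>"
    using \<open>set (map snd ws) \<subseteq> S\<close> unfolding S_def L_def by (simp add: word_eval_sanov_units)
qed

end

theorem lemma4p3:
  fixes E0 :: "'v set" and E1 :: "'e set" and r s :: "'e \<Rightarrow> 'v"
    and w :: 'v and f :: 'e
  assumes "graph E0 E1 r s"
    and "finite E0"
    and "sink E0 E1 s w"
    and "f \<in> E1" and "r f = w"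
  defines "L \<equiv> (LPA E0 E1 r s :: ((('v,'e) lpa_gen) list \<Rightarrow> 'k::field_char_0) set ring)"
  defines "a \<equiv> \<one>\<^bsub>L\<^esub> \<oplus>\<^bsub>L\<^esub> (lpa_cls E0 E1 r s (Gh f) \<oplus>\<^bsub>L\<^esub> lpa_cls E0 E1 r s (Gh f))"
  defines "b \<equiv> \<one>\<^bsub>L\<^esub> \<oplus>\<^bsub>L\<^esub> (lpa_cls E0 E1 r s (Ed f) \<oplus>\<^bsub>L\<^esub> lpa_cls E0 E1 r s (Ed f))"
  shows "a \<in> Units L \<and> b \<in> Units L \<and>
         free_group (subgroup_generated (units_of L) {a, b}) \<and>
         \<not> cyclic_group (subgroup_generated (units_of L) {a, b})"
proof -
  interpret edge_into_sink E0 E1 r s w f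
    using assms(1-5) by unfold_locales
  interpret L: ring L unfolding L_def by (rule ring_LPA)
  let ?G = "subgroup_generated (units_of L) {a, b}"
  have ab: "a = sanov_unit (True, True)" "b = sanov_unit (True, False)"
    by (simp_all add: a_def b_def L_def sanov_unit_eq)
  have G: "group ?G" by (rule group.group_subgroup_generated[OF L.units_group])
  have basis: "free_basis ?G {a, b}"
    unfolding ab L_def by (rule free_basis_sanov_units)
  have "\<not> comm_group ?G"
    by (rule not_comm_group_if_free_basis[OF basis, of a b]) (simp_all add: ab L_def sanov_units_distinct)
  then show ?thesis
    using G basis group.cyclic_imp_abelian_group[OF G] sanov_unit_Units
    by (auto simp: free_group_def ab L_def)
qed

end
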